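(* Let $G$ be a finitely generated residually finite group with $\nabla G>0$, and let $R$ be a subgroup of infinite index in $G$ such that for every finitely generated subgroup $L$ of infinite index in $G$ we have $[L:L\cap R]<\infty$. Then the kernel $K$ of the right action of $G$ on the set of right cosets $R\backslash G=\{Rg: g\in G\}$ (i.e. the set of $g\in G$ fixing every coset) is finite.
   Context: For a group $U$, $d(U)$ denotes the minimal cardinality of a generating set of $U$. The rank gradient of a finitely generated group $G$ is $\nabla G=\inf_U \frac{d(U)-1}{[G:U]}$, where $U$ ranges over all finite index subgroups of $G$. *)

theory Defs
  imports "HOL-Algebra.Algebra" "HOL-Analysis.Analysis"
begin

definition fin_index :: "('a, 'b) monoid_scheme \<Rightarrow> 'a set \<Rightarrow> bool" where
  "fin_index G H \<longleftrightarrow> finite (rcosets\<^bsub>G\<^esub> H)"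

definition grp_index :: "('a, 'b) monoid_scheme \<Rightarrow> 'a set \<Rightarrow> nat" where
  "grp_index G H = card (rcosets\<^bsub>G\<^esub> H)"

definition fg_subgroup :: "('a, 'b) monoid_scheme \<Rightarrow> 'a set \<Rightarrow> bool" where
  "fg_subgroup G H \<longleftrightarrow> (\<exists>S. finite S \<and> S \<subseteq> H \<and> generate G S = H)"

definition fin_gen_group :: "('a, 'b) monoid_scheme \<Rightarrow> bool" where
  "fin_gen_group G \<longleftrightarrow> fg_subgroup G (carrier G)"

definition min_gens :: "('a, 'b) monoid_scheme \<Rightarrow> 'a set \<Rightarrow> nat" where
  "min_gens G H = (LEAST n. \<exists>S. finite S \<and> S \<subseteq> H \<and> generate G S = H \<and> card S = n)"

definition rank_gradient :: "('a, 'b) monoid_scheme \<Rightarrow> real" where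
  "rank_gradient G = (INF U\<in>{U. subgroup U G \<and> fin_index G U}.
       (real (min_gens G U) - 1) / real (grp_index G U))"

definition residually_finite :: "('a, 'b) monoid_scheme \<Rightarrow> bool" where
  "residually_finite G \<longleftrightarrow> (\<forall>g\<in>carrier G. g \<noteq> \<one>\<^bsub>G\<^esub> \<longrightarrow>
      (\<exists>N. N \<lhd> G \<and> fin_index G N \<and> g \<notin> N))"

definition coset_action_kernel :: "('a, 'b) monoid_scheme \<Rightarrow> 'a set \<Rightarrow> 'a set" where
  "coset_action_kernel G R = {g \<in> carrier G. \<forall>h\<in>carrier G. R #>\<^bsub>G\<^esub> (h \<otimes>\<^bsub>G\<^esub> g) = R #>\<^bsub>G\<^esub> h}"

end

theory Submission
  imports Defs
begin

text \<open>
  Suppose the kernel K of the action on R\G is infinite; it is a normal subgroup contained in R.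
  Let G be generated by d elements and pick s > d / \<nabla>G distinct elements of K. Residual finiteness
  gives a finite-index N separating them, so U = KN satisfies [G:N] \<ge> s [G:U]. By Schreier,
  U has at most d [G:U] generators k n (k \<in> K, n \<in> N); their N-parts generate L \<le> N with
  U \<le> KL. If L had finite index, then (d(L) - 1) / [G:L] < d [G:U] / (s [G:U]) < \<nabla>G, which
  is impossible; so L is a finitely generated subgroup of infinite index. Then [L : L \<inter> R] is
  finite, and since U \<le> KL \<le> RL has finite index, so does R, contradicting the hypothesis.
\<close>

section \<open>Right cosets and index\<close>

context group begin

lemma rcos_eq_iff:
  assumes "subgroup H G" "x \<in> carrier G" "y \<in> carrier G"
  shows "H #> x = H #> y \<longleftrightarrow> x \<otimes> inv y \<in> H"
  using assms repr_independence[of x H y] rcos_self[of x H]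
  by (metis subgroup.rcos_module is_group)

lemma rcosets_eq_image_set_mult:
  assumes "subgroup A G" "subgroup B G" "A \<subseteq> B"
  shows "rcosets B = (\<lambda>C. B <#> C) ` (rcosets A)"
proof -
  have "B <#> (A #> x) = B #> x" if "x \<in> carrier G" for x
  proof -
    have "B <#> A = B"
      using set_mult_subgroup_idem[OF assms(2) subgroup_incl[OF assms]] .
    then show ?thesis
      using setmult_rcos_assoc that assms by (simp add: subgroup.subset)
  qed
  then show ?thesis unfolding RCOSETS_def by auto
qed

lemma finite_rcosets_mono:
  assumes "subgroup A G" "subgroup B G" "A \<subseteq> B" "finite (rcosets A)"
  shows "finite (rcosets B)"
  using rcosets_eq_image_set_mult[OF assms(1-3)] assms(4) by simp

lemma card_rcosets_mono:
  assumes "subgroup A G" "subgroup B G" "A \<subseteq> B" "finite (rcosets A)"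
  shows "card (rcosets B) \<le> card (rcosets A)"
  using rcosets_eq_image_set_mult[OF assms(1-3)] assms(4) by (simp add: card_image_le)

lemma card_rcosets_pos:
  assumes "subgroup H G" "finite (rcosets H)"
  shows "0 < card (rcosets H)"
  using rcosetsI[OF subgroup.subset[OF assms(1)] one_closed] assms(2) card_gt_0_iff by blast

lemma finite_rcosets_Int:
  assumes "subgroup A G" "subgroup B G" "finite (rcosets A)" "finite (rcosets B)"
  shows "finite (rcosets (A \<inter> B))"
proof -
  have "(A \<inter> B) #> x = (A #> x) \<inter> (B #> x)" if "x \<in> carrier G" for x
    using that assms(1,2) unfolding r_coset_def by auto (metis IntI r_cancel subgroup.mem_carrier)
  then have "rcosets (A \<inter> B) \<subseteq> (\<lambda>(C, D). C \<inter> D) ` ((rcosets A) \<times> (rcosets B))"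
    unfolding RCOSETS_def by fastforce
  then show ?thesis
    using assms(3,4) by (meson finite_SigmaI finite_imageI finite_subset)
qed

lemma residually_finite_avoids:
  assumes "residually_finite G" "finite P" "P \<subseteq> carrier G" "\<one> \<notin> P"
  shows "\<exists>N. subgroup N G \<and> finite (rcosets N) \<and> N \<inter> P = {}"
  using assms(2-4)
proof (induction P rule: finite_induct)
  case empty
  have "rcosets (carrier G) = {carrier G}"
    using coset_join2[OF _ subgroup_self] unfolding RCOSETS_def by auto
  then show ?case using subgroup_self by auto
next
  case (insert p P)
  then obtain N where N: "subgroup N G" "finite (rcosets N)" "N \<inter> P = {}" by auto
  obtain M where M: "M \<lhd> G" "finite (rcosets M)" "p \<notin> M"
    using assms(1) insert.prems unfolding residually_finite_def fin_index_def by auto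
  then have "subgroup (N \<inter> M) G" "finite (rcosets (N \<inter> M))"
    using N normal_imp_subgroup finite_rcosets_Int subgroups_Inter_pair by blast+
  then show ?case using N(3) M(3) by blast
qed

lemma residually_finite_separates:
  assumes "residually_finite G" "finite A" "A \<subseteq> carrier G"
  shows "\<exists>N. subgroup N G \<and> finite (rcosets N) \<and> inj_on (\<lambda>a. N #> a) A"
proof -
  define P where "P = (\<lambda>(a, b). a \<otimes> inv b) ` {(a, b) \<in> A \<times> A. a \<noteq> b}"
  have "finite P"
    unfolding P_def using assms(2) by (auto intro: finite_subset[of _ "A \<times> A"])
  moreover have "P \<subseteq> carrier G"
    unfolding P_def using assms(3) by auto
  moreover have "\<one> \<notin> P"
  proof
    assume "\<one> \<in> P"
    then obtain a b where "a \<in> A" "b \<in> A" "a \<noteq> b" "\<one> = a \<otimes> inv b" unfolding P_def by auto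
    then show False using assms(3) by (metis l_one inv_solve_right one_closed subsetD)
  qed
  ultimately obtain N where N: "subgroup N G" "finite (rcosets N)" "N \<inter> P = {}"
    using residually_finite_avoids[OF assms(1)] by blast
  have "inj_on (\<lambda>a. N #> a) A"
  proof (rule inj_onI)
    fix a b assume "a \<in> A" "b \<in> A" "N #> a = N #> b"
    then have "a \<otimes> inv b \<in> N" using rcos_eq_iff[OF N(1)] assms(3) by (meson subsetD)
    moreover have "a \<otimes> inv b \<in> P" if "a \<noteq> b"
      unfolding P_def using \<open>a \<in> A\<close> \<open>b \<in> A\<close> that by auto
    ultimately show "a = b" using N(3) by blast
  qed
  with N show ?thesis by blast
qed

lemma rcosets_transversal:
  assumes "subgroup H G"
  obtains T where "T \<subseteq> carrier G" "bij_betw (\<lambda>t. H #> t) T (rcosets H)"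
proof -
  define pick where "pick C = (SOME x. x \<in> C)" for C :: "'a set"
  have pick: "pick C \<in> carrier G \<and> H #> pick C = C" if C: "C \<in> rcosets H" for C
  proof -
    obtain x where x: "x \<in> carrier G" "C = H #> x" using C unfolding RCOSETS_def by blast
    then have "pick C \<in> H #> x"
      unfolding pick_def using rcos_self[OF x(1) assms] x(2) by (metis someI)
    then show ?thesis
      using x repr_independence[OF _ x(1) assms] r_coset_subset_G[OF subgroup.subset[OF assms] x(1)]
      by auto
  qed
  have "pick ` (rcosets H) \<subseteq> carrier G" using pick by auto
  moreover have "bij_betw (\<lambda>t. H #> t) (pick ` (rcosets H)) (rcosets H)"
    by (rule bij_betw_byWitness[of _ pick]) (use pick in auto)
  ultimately show thesis using that by blast
qed

section \<open>The kernel of the coset action\<close>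

lemma coset_action_kernel_iff:
  assumes "subgroup R G"
  shows "g \<in> coset_action_kernel G R \<longleftrightarrow>
    g \<in> carrier G \<and> (\<forall>h\<in>carrier G. h \<otimes> g \<otimes> inv h \<in> R)"
proof -
  have "R #> (h \<otimes> g) = R #> h \<longleftrightarrow> h \<otimes> g \<otimes> inv h \<in> R"
    if "g \<in> carrier G" "h \<in> carrier G" for g h
    using rcos_eq_iff[OF assms] that by simp
  then show ?thesis unfolding coset_action_kernel_def by auto
qed

lemma coset_action_kernel_subset:
  assumes "subgroup R G"
  shows "coset_action_kernel G R \<subseteq> R"
  using coset_action_kernel_iff[OF assms] by (force dest: bspec[of _ _ \<one>])

lemma coset_action_kernel_normal:
  assumes "subgroup R G"
  shows "coset_action_kernel G R \<lhd> G"
proof -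
  note K = coset_action_kernel_iff[OF assms]
  have "subgroup (coset_action_kernel G R) G"
  proof (rule subgroupI)
    show "coset_action_kernel G R \<subseteq> carrier G" using K by blast
    have "\<one> \<in> coset_action_kernel G R"
      using K subgroup.one_closed[OF assms] by simp
    then show "coset_action_kernel G R \<noteq> {}" by blast
  next
    fix g assume g: "g \<in> coset_action_kernel G R"
    have "h \<otimes> inv g \<otimes> inv h = inv (h \<otimes> g \<otimes> inv h)" if "h \<in> carrier G" for h
      using that g K by (simp add: inv_mult_group m_assoc)
    then show "inv g \<in> coset_action_kernel G R"
      using g K subgroup.m_inv_closed[OF assms] by auto
  next
    fix g1 g2 assume g: "g1 \<in> coset_action_kernel G R" "g2 \<in> coset_action_kernel G R"
    have "h \<otimes> (g1 \<otimes> g2) \<otimes> inv h = (h \<otimes> g1 \<otimes> inv h) \<otimes> (h \<otimes> g2 \<otimes> inv h)"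
      if "h \<in> carrier G" for h
      using that g K by (simp add: m_assoc) (simp add: m_assoc[symmetric])
    then show "g1 \<otimes> g2 \<in> coset_action_kernel G R"
      using g K subgroup.m_closed[OF assms] by auto
  qed
  moreover have "x \<otimes> g \<otimes> inv x \<in> coset_action_kernel G R"
    if x: "x \<in> carrier G" and g: "g \<in> coset_action_kernel G R" for x g
  proof -
    have "h \<otimes> (x \<otimes> g \<otimes> inv x) \<otimes> inv h = (h \<otimes> x) \<otimes> g \<otimes> inv (h \<otimes> x)"
      if "h \<in> carrier G" for h
      using that x g K by (simp add: m_assoc inv_mult_group)
    then show ?thesis using x g K by auto
  qed
  ultimately show ?thesis unfolding normal_inv_iff by blast
qed

section \<open>Counting and covering cosets\<close>

lemma card_rcosets_mult_le:
  assumes N: "subgroup N G" "finite (rcosets N)" and U: "subgroup U G" "N \<subseteq> U"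
    and A: "A \<subseteq> U" "inj_on (\<lambda>a. N #> a) A"
  shows "card A * card (rcosets U) \<le> card (rcosets N)"
proof -
  obtain T where T: "T \<subseteq> carrier G" "bij_betw (\<lambda>t. U #> t) T (rcosets U)"
    using rcosets_transversal[OF U(1)] by blast
  have UC: "U \<subseteq> carrier G" using U(1) subgroup.subset by blast
  have "inj_on (\<lambda>(a, t). N #> (a \<otimes> t)) (A \<times> T)"
  proof (rule inj_onI, clarify)
    fix a t a' t'
    assume at: "a \<in> A" "t \<in> T" "a' \<in> A" "t' \<in> T" and eq: "N #> (a \<otimes> t) = N #> (a' \<otimes> t')"
    then have carr: "a \<in> carrier G" "a' \<in> carrier G" "t \<in> carrier G" "t' \<in> carrier G"
      using A(1) UC T(1) by auto
    have "U #> (a \<otimes> t) = U #> (a' \<otimes> t')"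
      using eq U(2) rcos_eq_iff[OF N(1)] rcos_eq_iff[OF U(1)] carr by auto
    moreover have "U #> (b \<otimes> s) = U #> s" if "b \<in> A" "s \<in> T" for b s
    proof -
      have "b \<in> U" "b \<in> carrier G" "s \<in> carrier G" using that A(1) UC T(1) by auto
      then show ?thesis using UC coset_join2[OF _ U(1)] by (metis coset_mult_assoc)
    qed
    ultimately have "U #> t = U #> t'" using at by simp
    then have tt: "t = t'" using T(2) at unfolding bij_betw_def inj_on_def by blast
    have "a \<otimes> t \<otimes> inv (a' \<otimes> t) = a \<otimes> inv a'"
      using carr by (simp add: m_assoc inv_mult_group) (simp add: m_assoc[symmetric])
    then have "N #> a = N #> a'"
      using eq tt rcos_eq_iff[OF N(1)] carr by auto
    then show "a = a' \<and> t = t'" using A(2) at tt unfolding inj_on_def by blast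
  qed
  moreover have "(\<lambda>(a, t). N #> (a \<otimes> t)) ` (A \<times> T) \<subseteq> rcosets N"
    using A(1) UC T(1) N(1) by (auto intro!: rcosetsI subgroup.subset)
  ultimately have "card (A \<times> T) \<le> card (rcosets N)"
    using card_inj_on_le N(2) by blast
  then show ?thesis using bij_betw_same_card[OF T(2)] by (simp add: card_cartesian_product)
qed

lemma relative_rcosets_representatives:
  assumes R: "subgroup R G" and L: "subgroup L G"
    and LR: "finite (rcosets\<^bsub>G\<lparr>carrier := L\<rparr>\<^esub> (L \<inter> R))"
  obtains M where "M \<subseteq> L" "finite M" "\<And>l. l \<in> L \<Longrightarrow> \<exists>m\<in>M. l \<otimes> inv m \<in> R"
proof -
  have LC: "L \<subseteq> carrier G" using L subgroup.subset by blast
  have "rcosets\<^bsub>G\<lparr>carrier := L\<rparr>\<^esub> (L \<inter> R) = (\<lambda>l. (L \<inter> R) #> l) ` L"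
    unfolding RCOSETS_def r_coset_def by (simp add: UNION_singleton_eq_range)
  then have "finite ((\<lambda>l. (L \<inter> R) #> l) ` L)" using LR by simp
  then obtain M where M: "M \<subseteq> L" "finite M" "(\<lambda>l. (L \<inter> R) #> l) ` L = (\<lambda>l. (L \<inter> R) #> l) ` M"
    by (meson finite_subset_image order_refl)
  have "\<exists>m\<in>M. l \<otimes> inv m \<in> R" if l: "l \<in> L" for l
  proof -
    have "(L \<inter> R) #> l \<in> (\<lambda>l. (L \<inter> R) #> l) ` M" using M(3) l by (metis imageI)
    then obtain m where m: "m \<in> M" "(L \<inter> R) #> l = (L \<inter> R) #> m" by blast
    then have "l \<otimes> inv m \<in> L \<inter> R"
      using rcos_eq_iff[OF subgroups_Inter_pair[OF L R], of l m] l M(1) LC by (simp add: subset_iff)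
    then show ?thesis using m(1) by blast
  qed
  with M(1,2) show thesis using that by blast
qed

lemma finite_rcosets_if_set_mult_has_finite_index:
  assumes R: "subgroup R G" and L: "subgroup L G"
    and U: "subgroup U G" "finite (rcosets U)" "U \<subseteq> R <#> L"
    and LR: "finite (rcosets\<^bsub>G\<lparr>carrier := L\<rparr>\<^esub> (L \<inter> R))"
  shows "finite (rcosets R)"
proof -
  have RC: "R \<subseteq> carrier G" and LC: "L \<subseteq> carrier G"
    using R L subgroup.subset by blast+
  obtain T where T: "T \<subseteq> carrier G" "bij_betw (\<lambda>t. U #> t) T (rcosets U)"
    using rcosets_transversal[OF U(1)] by blast
  obtain M where M: "M \<subseteq> L" "finite M" and M_rep: "\<And>l. l \<in> L \<Longrightarrow> \<exists>m\<in>M. l \<otimes> inv m \<in> R"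
    using relative_rcosets_representatives[OF R L LR] by blast
  have "rcosets R \<subseteq> (\<lambda>(m, t). R #> (m \<otimes> t)) ` (M \<times> T)"
  proof
    fix C assume "C \<in> rcosets R"
    then obtain g where g: "g \<in> carrier G" "C = R #> g" by (auto simp: RCOSETS_def)
    have "U #> g \<in> rcosets U" using rcosetsI[OF _ g(1)] U(1) subgroup.subset by blast
    then obtain t where t: "t \<in> T" "U #> g = U #> t"
      using bij_betw_imp_surj_on[OF T(2)] by (metis imageE)
    have tC: "t \<in> carrier G" using t(1) T(1) by blast
    have "g \<otimes> inv t \<in> U" using t(2) rcos_eq_iff[OF U(1) g(1) tC] by simp
    then have "g \<otimes> inv t \<in> R <#> L" using U(3) by blast
    then obtain r l where rl: "r \<in> R" "l \<in> L" "g \<otimes> inv t = r \<otimes> l" unfolding set_mult_def by blast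
    obtain m where m: "m \<in> M" "l \<otimes> inv m \<in> R" using M_rep[OF rl(2)] by blast
    have carr: "r \<in> carrier G" "l \<in> carrier G" "m \<in> carrier G"
      using rl m M(1) RC LC by auto
    have "g \<otimes> inv (m \<otimes> t) = (g \<otimes> inv t) \<otimes> inv m"
      using g(1) tC carr by (simp add: m_assoc inv_mult_group)
    also have "\<dots> = r \<otimes> (l \<otimes> inv m)" using rl(3) carr by (simp add: m_assoc)
    finally have "g \<otimes> inv (m \<otimes> t) \<in> R" using rl(1) m(2) subgroup.m_closed[OF R] by simp
    then have "C = R #> (m \<otimes> t)" using g rcos_eq_iff[OF R] tC carr by simp
    then show "C \<in> (\<lambda>(m, t). R #> (m \<otimes> t)) ` (M \<times> T)"
      using m(1) t(1) by (auto intro!: image_eqI[of _ _ "(m, t)"])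
  qed
  moreover have "finite T"
    using bij_betw_finite[OF T(2)] U(2) by simp
  ultimately show ?thesis using M(2) by (meson finite_SigmaI finite_imageI finite_subset)
qed

lemma normal_set_mult_generators:
  assumes K: "K \<lhd> G" and N: "subgroup N G" and Y: "finite Y" "Y \<subseteq> K <#> N"
  obtains Z where "Z \<subseteq> N" "finite Z" "card Z \<le> card Y" "generate G Y \<subseteq> K <#> generate G Z"
proof -
  have "\<forall>y\<in>Y. \<exists>m. m \<in> N \<and> (\<exists>k\<in>K. y = k \<otimes> m)"
    using Y(2) unfolding set_mult_def by blast
  then obtain n where n: "\<And>y. y \<in> Y \<Longrightarrow> n y \<in> N \<and> (\<exists>k\<in>K. y = k \<otimes> n y)"
    by metis
  define Z where "Z = n ` Y"
  have ZN: "Z \<subseteq> N" and ZC: "Z \<subseteq> carrier G"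
    unfolding Z_def using n N subgroup.subset by blast+
  have "Y \<subseteq> K <#> generate G Z"
  proof
    fix y assume y: "y \<in> Y"
    then obtain k where "k \<in> K" "y = k \<otimes> n y" using n by blast
    moreover have "n y \<in> generate G Z" unfolding Z_def using y by (blast intro: generate.incl)
    ultimately show "y \<in> K <#> generate G Z" unfolding set_mult_def by blast
  qed
  then have "generate G Y \<subseteq> K <#> generate G Z"
    using generate_subgroup_incl mult_norm_subgroup[OF K generate_is_subgroup[OF ZC]] by blast
  moreover have "finite Z" "card Z \<le> card Y" unfolding Z_def using Y(1) card_image_le by auto
  ultimately show thesis using that ZN by blast
qed

end

section \<open>Schreier generators\<close>

locale rcoset_transversal = group +
  fixes H :: "'a set" and r :: "'a \<Rightarrow> 'a"
  assumes subgroup_H: "subgroup H G"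
    and rep_in_rcos: "x \<in> carrier G \<Longrightarrow> r x \<in> H #> x"
    and rep_cong: "H #> x = H #> y \<Longrightarrow> r x = r y"
    and rep_one: "r \<one> = \<one>"
begin

lemma rep_closed: "x \<in> carrier G \<Longrightarrow> r x \<in> carrier G"
  using rep_in_rcos r_coset_subset_G subgroup.subset[OF subgroup_H] by blast

lemma rcos_rep: "x \<in> carrier G \<Longrightarrow> H #> r x = H #> x"
  using repr_independence[OF rep_in_rcos _ subgroup_H] by simp

lemma rep_rep: "x \<in> carrier G \<Longrightarrow> r (r x) = r x"
  using rep_cong[OF rcos_rep] .

lemma rep_mult_rep: "x \<in> carrier G \<Longrightarrow> y \<in> carrier G \<Longrightarrow> r (r x \<otimes> y) = r (x \<otimes> y)"
  using rcos_rep rep_closed subgroup.subset[OF subgroup_H]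
  by (intro rep_cong) (metis coset_mult_assoc)

lemma mult_inv_rep_in_subgroup: "x \<in> carrier G \<Longrightarrow> x \<otimes> inv (r x) \<in> H"
  using rcos_eq_iff[OF subgroup_H _ rep_closed] rcos_rep by metis

lemma rep_subgroup: "h \<in> H \<Longrightarrow> r h = \<one>"
  using rep_one rep_cong coset_join2[OF _ subgroup_H] subgroup.mem_carrier[OF subgroup_H]
  by (metis coset_mult_one one_closed subgroup.subset[OF subgroup_H])

definition schreier_generators :: "'a set \<Rightarrow> 'a set" where
  "schreier_generators S = (\<lambda>(t, s). t \<otimes> s \<otimes> inv (r (t \<otimes> s))) ` (r ` carrier G \<times> S)"

lemma schreier_rewriting:
  assumes S: "S \<subseteq> carrier G" and g: "g \<in> generate G S" and t: "t \<in> r ` carrier G"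
  shows "t \<otimes> g \<otimes> inv (r (t \<otimes> g)) \<in> generate G (schreier_generators S)"
  using g t
proof (induction arbitrary: t rule: generate.induct)
  case one
  then show ?case using rep_rep rep_closed by (auto intro: generate.one)
next
  case (incl s)
  then show ?case unfolding schreier_generators_def by (force intro: generate.incl)
next
  case (inv s)
  have tC: "t \<in> carrier G" and sC: "s \<in> carrier G" using inv rep_closed S by auto
  define t' where "t' = r (t \<otimes> inv s)"
  have t'C: "t' \<in> carrier G" unfolding t'_def using tC sC rep_closed by simp
  have "r (t' \<otimes> s) = r (t \<otimes> inv s \<otimes> s)" unfolding t'_def using rep_mult_rep tC sC by simp
  also have "\<dots> = t" using inv.prems rep_rep tC sC by (auto simp: m_assoc)
  finally have "t' \<otimes> s \<otimes> inv t \<in> schreier_generators S"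
    unfolding schreier_generators_def t'_def using inv.hyps tC sC
    by (auto intro!: image_eqI[of _ _ "(r (t \<otimes> inv s), s)"])
  then have "inv (t' \<otimes> s \<otimes> inv t) \<in> generate G (schreier_generators S)"
    using S rep_closed unfolding schreier_generators_def
    by (intro generate_m_inv_closed generate.incl) auto
  moreover have "inv (t' \<otimes> s \<otimes> inv t) = t \<otimes> inv s \<otimes> inv t'"
    using tC sC t'C by (simp add: inv_mult_group m_assoc)
  ultimately show ?case unfolding t'_def by simp
next
  case (eng g1 g2)
  have gC: "g1 \<in> carrier G" "g2 \<in> carrier G"
    using eng.hyps generate_incl[OF S] by auto
  have tC: "t \<in> carrier G" using eng.prems rep_closed by auto
  define t1 where "t1 = r (t \<otimes> g1)"
  have t1C: "t1 \<in> carrier G" unfolding t1_def using tC gC rep_closed by simp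
  have t1T: "t1 \<in> r ` carrier G" unfolding t1_def using tC gC by simp
  have rep12: "r (t1 \<otimes> g2) = r (t \<otimes> (g1 \<otimes> g2))"
    unfolding t1_def using rep_mult_rep tC gC by (simp add: m_assoc)
  have "(t \<otimes> g1 \<otimes> inv t1) \<otimes> (t1 \<otimes> g2 \<otimes> inv (r (t1 \<otimes> g2)))
      \<in> generate G (schreier_generators S)"
    using eng.IH(1)[OF eng.prems] eng.IH(2)[OF t1T] unfolding t1_def by (rule generate.eng)
  moreover have "(t \<otimes> g1 \<otimes> inv t1) \<otimes> (t1 \<otimes> g2 \<otimes> inv (r (t1 \<otimes> g2))) =
      t \<otimes> (g1 \<otimes> g2) \<otimes> inv (r (t \<otimes> (g1 \<otimes> g2)))"
    unfolding rep12 using tC gC t1C rep_closed by (simp add: m_assoc) (simp add: m_assoc[symmetric])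
  ultimately show ?case by simp
qed


lemma generate_schreier_generators:
  assumes "S \<subseteq> carrier G" "generate G S = carrier G"
  shows "generate G (schreier_generators S) = H"
proof
  have "schreier_generators S \<subseteq> H"
    unfolding schreier_generators_def using assms(1) rep_closed mult_inv_rep_in_subgroup by auto
  then show "generate G (schreier_generators S) \<subseteq> H"
    using generate_subgroup_incl[OF _ subgroup_H] by blast
next
  show "H \<subseteq> generate G (schreier_generators S)"
  proof
    fix h assume h: "h \<in> H"
    then have "h \<in> carrier G" using subgroup.mem_carrier[OF subgroup_H] by blast
    moreover have "\<one> \<in> r ` carrier G" using rep_one by force
    ultimately have "\<one> \<otimes> h \<otimes> inv (r (\<one> \<otimes> h)) \<in> generate G (schreier_generators S)"
      using schreier_rewriting assms by blast
    then show "h \<in> generate G (schreier_generators S)"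
      using rep_subgroup[OF h] \<open>h \<in> carrier G\<close> by simp
  qed
qed

lemma reps_eq_image_rcosets: "r ` carrier G = (\<lambda>C. r (SOME x. x \<in> C)) ` (rcosets H)"
proof -
  have "r (SOME y. y \<in> H #> x) = r x" if "x \<in> carrier G" for x
    using rcos_self[OF that subgroup_H] repr_independence[OF _ that subgroup_H]
    by (metis someI rep_cong)
  then show ?thesis unfolding RCOSETS_def by (auto simp: image_iff)
qed

lemma card_schreier_generators:
  assumes "finite (rcosets H)" "finite S"
  shows "finite (schreier_generators S)"
    and "card (schreier_generators S) \<le> card (rcosets H) * card S"
proof -
  have reps: "finite (r ` carrier G)" "card (r ` carrier G) \<le> card (rcosets H)"
    unfolding reps_eq_image_rcosets using assms(1) card_image_le by auto
  then show "finite (schreier_generators S)"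
    unfolding schreier_generators_def using assms(2) by simp
  have "card (schreier_generators S) \<le> card (r ` carrier G \<times> S)"
    unfolding schreier_generators_def using reps(1) assms(2) by (intro card_image_le) simp
  also have "\<dots> \<le> card (rcosets H) * card S"
    using reps(2) by (simp add: card_cartesian_product)
  finally show "card (schreier_generators S) \<le> card (rcosets H) * card S" .
qed

end

context group begin

lemma schreier_finite_index:
  assumes S: "finite S" "S \<subseteq> carrier G" "generate G S = carrier G"
    and H: "subgroup H G" "finite (rcosets H)"
  obtains Y where "finite Y" "Y \<subseteq> H" "generate G Y = H" "card Y \<le> card (rcosets H) * card S"
proof -
  define rep where "rep C = (if C = H then \<one> else (SOME y. y \<in> C))" for C
  have "rcoset_transversal G H (\<lambda>x. rep (H #> x))"
  proof (intro rcoset_transversal.intro rcoset_transversal_axioms.intro is_group H(1))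
    show "rep (H #> x) \<in> H #> x" if "x \<in> carrier G" for x
      using rcos_self[OF that H(1)] subgroup.one_closed[OF H(1)]
      unfolding rep_def by (auto intro: someI)
    show "rep (H #> \<one>) = \<one>"
      unfolding rep_def using subgroup.subset[OF H(1)] by simp
  qed simp
  then interpret rcoset_transversal G H "\<lambda>x. rep (H #> x)" .
  show thesis
    using that card_schreier_generators[OF H(2) S(1)] generate_schreier_generators[OF S(2,3)]
    by (metis generate.incl subsetI)
qed

section \<open>Rank gradient\<close>

lemma rank_gradient_le_generators:
  assumes "Z \<subseteq> carrier G" "finite Z" "fin_index G (generate G Z)"
  shows "rank_gradient G \<le> (real (card Z) - 1) / real (grp_index G (generate G Z))"
proof -
  define F where "F U = (real (min_gens G U) - 1) / real (grp_index G U)" for U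
  have "F U \<ge> -1" for U
  proof (cases "grp_index G U = 0")
    case False
    then have "-1 \<le> - 1 / real (grp_index G U)" by (simp add: field_simps)
    also have "\<dots> \<le> F U" unfolding F_def by (intro divide_right_mono) auto
    finally show ?thesis .
  qed (simp add: F_def)
  then have "bdd_below (F ` {U. subgroup U G \<and> fin_index G U})" by (intro bdd_belowI2)
  then have "rank_gradient G \<le> F (generate G Z)"
    unfolding rank_gradient_def F_def[symmetric]
    using generate_is_subgroup[OF assms(1)] assms(3) by (intro cInf_lower) auto
  moreover have "min_gens G (generate G Z) \<le> card Z"
    unfolding min_gens_def using assms(2) by (intro Least_le) (auto intro: generate.incl)
  ultimately show ?thesis
    unfolding F_def by (smt (verit) divide_right_mono of_nat_0_le_iff of_nat_le_iff)
qed

lemma rank_gradient_less: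
  assumes Z: "Z \<subseteq> carrier G" "finite Z" "fin_index G (generate G Z)"
    and bounds: "card Z \<le> u * d" "s * u \<le> grp_index G (generate G Z)" "0 < u" "0 < s"
  shows "rank_gradient G < real d / real s"
proof -
  let ?i = "real (grp_index G (generate G Z))"
  have i_pos: "?i > 0" using bounds(2-4) by (metis of_nat_0_less_iff nat_0_less_mult_iff order_less_le_trans)
  have "rank_gradient G \<le> (real (card Z) - 1) / ?i"
    using rank_gradient_le_generators[OF Z] .
  also have "\<dots> < real (card Z) / ?i" using i_pos by (simp add: divide_strict_right_mono)
  also have "\<dots> \<le> real (u * d) / real (s * u)"
  proof (rule frac_le)
    show "real (card Z) \<le> real (u * d)" "real (s * u) \<le> ?i"
      using bounds(1,2) by (simp_all only: of_nat_le_iff)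
    show "0 < real (s * u)" using bounds(3,4) by simp
  qed simp
  also have "\<dots> = real d / real s" using bounds(3) by simp
  finally show ?thesis .
qed

lemma exists_small_generators_modulo_normal:
  assumes RF: "residually_finite G"
    and S: "finite S" "S \<subseteq> carrier G" "generate G S = carrier G"
    and K: "K \<lhd> G" "A \<subseteq> K" "finite A"
  obtains U Z where "subgroup U G" "finite (rcosets U)" "U \<subseteq> K <#> generate G Z"
    "finite Z" "Z \<subseteq> carrier G" "card Z \<le> card (rcosets U) * card S"
    "finite (rcosets (generate G Z)) \<Longrightarrow> card A * card (rcosets U) \<le> card (rcosets (generate G Z))"
proof -
  have KC: "K \<subseteq> carrier G" using K(1) normal_imp_subgroup subgroup.subset by blast
  obtain N where N: "subgroup N G" "finite (rcosets N)" "inj_on (\<lambda>a. N #> a) A"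
    using residually_finite_separates[OF RF K(3)] K(2) KC by blast
  define U where "U = K <#> N"
  have U: "subgroup U G" unfolding U_def using mult_norm_subgroup[OF K(1) N(1)] .
  have "second_isomorphism_grp K G N"
    by (intro second_isomorphism_grp.intro second_isomorphism_grp_axioms.intro K(1) N(1))
  then have NU: "N \<subseteq> U" and "K \<subseteq> U"
    unfolding U_def
    by (simp_all add: second_isomorphism_grp.S_contained_in_set_mult
        second_isomorphism_grp.H_contained_in_set_mult)
  then have AU: "A \<subseteq> U" using K(2) by blast
  have U_fin: "finite (rcosets U)" using finite_rcosets_mono[OF N(1) U NU N(2)] .
  have A_U: "card A * card (rcosets U) \<le> card (rcosets N)"
    using card_rcosets_mult_le[OF N(1,2) U NU AU N(3)] .
  obtain Y where Y: "finite Y" "Y \<subseteq> U" "generate G Y = U" "card Y \<le> card (rcosets U) * card S"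
    using schreier_finite_index[OF S U U_fin] .
  obtain Z where Z: "Z \<subseteq> N" "finite Z" "card Z \<le> card Y" "generate G Y \<subseteq> K <#> generate G Z"
    using normal_set_mult_generators[OF K(1) N(1) Y(1) Y(2)[unfolded U_def]] .
  have ZC: "Z \<subseteq> carrier G" using Z(1) N(1) subgroup.subset by blast
  have "card (rcosets N) \<le> card (rcosets (generate G Z))" if "finite (rcosets (generate G Z))"
    using card_rcosets_mono[OF generate_is_subgroup[OF ZC] N(1) _ that]
      generate_subgroup_incl[OF Z(1) N(1)] by blast
  moreover have "card Z \<le> card (rcosets U) * card S" using Z(3) Y(4) by linarith
  ultimately show thesis
    using that[OF U U_fin _ Z(2) ZC] Z(4) Y(3) A_U by (meson order_trans)
qed

lemma infinite_normal_times_fg_infinite_index: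
  assumes RF: "residually_finite G" and FG: "fin_gen_group G" and RG: "rank_gradient G > 0"
    and K: "K \<lhd> G" "infinite K"
  obtains U L where "subgroup U G" "finite (rcosets U)" "U \<subseteq> K <#> L"
    "subgroup L G" "fg_subgroup G L" "\<not> fin_index G L"
proof -
  obtain S where S: "finite S" "S \<subseteq> carrier G" "generate G S = carrier G"
    using FG unfolding fin_gen_group_def fg_subgroup_def by blast
  obtain s :: nat where s: "real (card S) < rank_gradient G * real s"
    using reals_Archimedean3[OF RG] by (metis mult.commute)
  then have s_pos: "0 < s" by (cases s) auto
  obtain A where A: "A \<subseteq> K" "finite A" "card A = s"
    using infinite_arbitrarily_large[OF K(2)] by blast
  obtain U Z where U: "subgroup U G" "finite (rcosets U)" "U \<subseteq> K <#> generate G Z"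
    and Z: "finite Z" "Z \<subseteq> carrier G" "card Z \<le> card (rcosets U) * card S"
    and index: "finite (rcosets (generate G Z)) \<Longrightarrow> s * card (rcosets U) \<le> card (rcosets (generate G Z))"
    using exists_small_generators_modulo_normal[OF RF S K(1) A(1,2)] A(3) by metis
  have "\<not> fin_index G (generate G Z)"
  proof
    assume fin: "fin_index G (generate G Z)"
    then have "rank_gradient G < real (card S) / real s"
      using rank_gradient_less[OF Z(2,1) fin Z(3)] index card_rcosets_pos[OF U(1,2)] s_pos
      unfolding fin_index_def grp_index_def by (simp add: mult.commute)
    then show False using s s_pos by (simp add: field_simps)
  qed
  moreover have "subgroup (generate G Z) G" "fg_subgroup G (generate G Z)"
    using generate_is_subgroup[OF Z(2)] Z(1) unfolding fg_subgroup_def by (auto intro: generate.incl)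
  ultimately show thesis using that U by blast
qed

end

theorem theorem4p2:
  fixes G :: "('a, 'b) monoid_scheme" and R :: "'a set"
  assumes "group G"
    and "fin_gen_group G"
    and "residually_finite G"
    and "rank_gradient G > 0"
    and "subgroup R G"
    and "\<not> fin_index G R"
    and "\<And>L. subgroup L G \<Longrightarrow> fg_subgroup G L \<Longrightarrow> \<not> fin_index G L \<Longrightarrow>
           fin_index (G\<lparr>carrier := L\<rparr>) (L \<inter> R)"
  shows "finite (coset_action_kernel G R)"
proof (rule ccontr)
  interpret group G by fact
  assume "infinite (coset_action_kernel G R)"
  then obtain U L where U: "subgroup U G" "finite (rcosets\<^bsub>G\<^esub> U)"
      "U \<subseteq> coset_action_kernel G R <#>\<^bsub>G\<^esub> L"
    and L: "subgroup L G" "fg_subgroup G L" "\<not> fin_index G L"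
    using infinite_normal_times_fg_infinite_index[OF assms(3,2,4) coset_action_kernel_normal[OF assms(5)]]
    by blast
  have "U \<subseteq> R <#>\<^bsub>G\<^esub> L"
    using U(3) mono_set_mult[OF coset_action_kernel_subset[OF assms(5)] order_refl] by blast
  then have "fin_index G R"
    using finite_rcosets_if_set_mult_has_finite_index[OF assms(5) L(1) U(1,2)] assms(7)[OF L]
    unfolding fin_index_def by blast
  with assms(6) show False by blast
qed
end
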